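(* $$\sum_{n\ge0}\Bigl(\sum_{\sigma\in\mathfrak S_n}u^{2{\rm L}(\sigma)}v^{n-2{\rm L}(\sigma)}\beta^{{\rm RLmin}(\sigma)}\Bigr)\frac{t^n}{n!}=\left(\frac{\sqrt{v^2-u^2}}{\sqrt{v^2-u^2}\cosh\bigl(t\sqrt{v^2-u^2}\bigr)-v\sinh\bigl(t\sqrt{v^2-u^2}\bigr)}\right)^{\beta}.$$
   Context: For $\sigma=\sigma_1\cdots\sigma_n\in\mathfrak S_n$ ($\mathfrak S_0$ = empty permutation): ${\rm L}(\sigma)$ is the number of $i$ with $1\le i<n$ and $\sigma_{i-1}<\sigma_i>\sigma_{i+1}$ (convention $\sigma_0=0$); ${\rm RLmin}(\sigma)$ is the number of $i$ with $\sigma_j>\sigma_i$ for all $j>i$. Identity of formal power series in $t$; the base is a power series in $t$ with constant term $1$ depending only on $v^2-u^2$ and $v$, and powers are defined by $G^c=\exp(c\log G)$. *)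

theory Defs
  imports "HOL-Computational_Algebra.Formal_Power_Series" "HOL-Combinatorics.Multiset_Permutations"
begin

(* A permutation sigma = sigma_1 ... sigma_n of {1..n} is a list xs with sigma_i = xs ! (i-1). *)

definition perm_at :: "nat list \<Rightarrow> nat \<Rightarrow> nat" where
  "perm_at xs i = (if i = 0 then 0 else xs ! (i - 1))"

definition peakL :: "nat list \<Rightarrow> nat" where
  "peakL xs = card {i \<in> {1..<length xs}.
      perm_at xs (i - 1) < perm_at xs i \<and> perm_at xs i > perm_at xs (i + 1)}"

definition RLmin :: "nat list \<Rightarrow> nat" where
  "RLmin xs = card {i \<in> {1..length xs}.
      \<forall>j \<in> {i<..length xs}. perm_at xs j > perm_at xs i}"

(* formal power series in t of cosh(t w) and sinh(t w)/w, where w^2 = d (only even powers of w occur) *)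
definition cosh_fps :: "real \<Rightarrow> real fps" where
  "cosh_fps d = Abs_fps (\<lambda>n. if even n then d ^ (n div 2) / fact n else 0)"

definition sinhw_fps :: "real \<Rightarrow> real fps" where
  "sinhw_fps d = Abs_fps (\<lambda>n. if odd n then d ^ (n div 2) / fact n else 0)"

(* G^c = exp(c log G) for a series G with constant term 1 *)
definition fps_pow_real :: "real fps \<Rightarrow> real \<Rightarrow> real fps" where
  "fps_pow_real G c = fps_exp c oo (fps_ln 1 oo (G - 1))"

end

theory Submission
  imports Defs "HOL-Library.Infinite_Set"
begin

text \<open>
  Let \<open>A\<^sub>n\<close> be the inner sum of the theorem and \<open>X\<^sub>n\<close> the analogous sum over words of length
  \<open>n\<close> bordered by \<open>0\<close> on both sides, weighted by \<open>u^(2p) v^(n + 1 - 2p)\<close> with \<open>p\<close> the number of peaks.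
  Cutting a permutation at its smallest letter, \<open>\<sigma> = \<alpha> m \<gamma>\<close>, makes \<open>m\<close> a right-to-left minimum
  and separates the peaks of \<open>\<alpha>\<close> and \<open>\<gamma>\<close>. As the statistics only depend on relative order, this
  gives binomial convolutions, i.e. \<open>X' = X\<^sup>2 - (v\<^sup>2 - u\<^sup>2)\<close>, \<open>X(0) = v\<close> and \<open>A' = \<beta> X A\<close>,
  \<open>A(0) = 1\<close> for the exponential generating functions. The Riccati equation is linearised by
  \<open>X = -D'/D\<close>, where \<open>D = cosh(t w) - v sinh(t w)/w\<close> (\<open>w\<^sup>2 = v\<^sup>2 - u\<^sup>2\<close>) is the solution of
  \<open>D'' = w\<^sup>2 D\<close>, \<open>D(0) = 1\<close>, \<open>D'(0) = -v\<close>. Hence \<open>A'/A = \<beta> G'/G\<close> for \<open>G = 1/D\<close>, so \<open>A = G\<^sup>\<beta>\<close>.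
\<close>

unbundle fps_syntax

section \<open>Peaks and right-to-left minima of words\<close>

text \<open>
  \<open>peak_count a xs b\<close> counts the peaks among the letters of \<open>xs\<close> in the bordered word \<open>a xs b\<close>;
  \<open>peak_count_inf\<close> has right border \<open>+\<infinity>\<close>, so the last letter is never a peak.
\<close>

fun peak_count :: "'a::linorder \<Rightarrow> 'a list \<Rightarrow> 'a \<Rightarrow> nat" where
  "peak_count a [] b = 0"
| "peak_count a [x] b = (if a < x \<and> b < x then 1 else 0)"
| "peak_count a (x # y # ys) b = (if a < x \<and> y < x then 1 else 0) + peak_count x (y # ys) b"

fun peak_count_inf :: "'a::linorder \<Rightarrow> 'a list \<Rightarrow> nat" where
  "peak_count_inf a [] = 0"
| "peak_count_inf a [x] = 0"
| "peak_count_inf a (x # y # ys) = (if a < x \<and> y < x then 1 else 0) + peak_count_inf x (y # ys)"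

fun rlmin_count :: "'a::linorder list \<Rightarrow> nat" where
  "rlmin_count [] = 0"
| "rlmin_count (x # xs) = (if \<forall>y\<in>set xs. x < y then 1 else 0) + rlmin_count xs"

lemma peak_count_Cons:
  "peak_count a (x # xs) b = (if a < x \<and> hd (xs @ [b]) < x then 1 else 0) + peak_count x xs b"
  by (cases xs) auto

lemma peak_count_inf_Cons:
  "peak_count_inf a (x # xs) = (if xs \<noteq> [] \<and> a < x \<and> hd xs < x then 1 else 0) + peak_count_inf x xs"
  by (cases xs) auto

declare peak_count.simps(2,3) [simp del] peak_count_inf.simps(2,3) [simp del]

lemma card_filter_insert_Suc_image:
  assumes "finite J" and "0 \<notin> J"
  shows "card {i \<in> insert 1 (Suc ` J). P i} = (if P 1 then 1 else 0) + card {j \<in> J. P (Suc j)}"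
proof -
  have "{i \<in> insert 1 (Suc ` J). P i} = (if P 1 then {1} else {}) \<union> Suc ` {j \<in> J. P (Suc j)}"
    by auto
  moreover have "1 \<notin> Suc ` {j \<in> J. P (Suc j)}" using assms(2) by auto
  ultimately show ?thesis using assms(1) by (simp add: card_image)
qed

definition is_peak :: "'a::linorder list \<Rightarrow> nat \<Rightarrow> bool" where
  "is_peak w i \<longleftrightarrow> w ! (i - 1) < w ! i \<and> w ! (i + 1) < w ! i"

lemma is_peak_Cons_Suc: "i \<ge> 1 \<Longrightarrow> is_peak (a # w) (Suc i) = is_peak w i"
  by (cases i) (simp_all add: is_peak_def)

lemma peak_count_inf_eq_card: "peak_count_inf a xs = card {i \<in> {1..<length xs}. is_peak (a # xs) i}"
proof (induction xs arbitrary: a)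
  case (Cons x xs)
  show ?case
  proof (cases xs)
    case (Cons y ys)
    have "{1..<length (x # xs)} = insert 1 (Suc ` {1..<length xs})"
      using Cons by (auto simp: image_iff)
    then have "card {i \<in> {1..<length (x # xs)}. is_peak (a # x # xs) i}
        = (if is_peak (a # x # xs) 1 then 1 else 0) + card {j \<in> {1..<length xs}. is_peak (a # x # xs) (Suc j)}"
      using card_filter_insert_Suc_image[of "{1..<length xs}" "is_peak (a # x # xs)"] by simp
    also have "{j \<in> {1..<length xs}. is_peak (a # x # xs) (Suc j)} = {j \<in> {1..<length xs}. is_peak (x # xs) j}"
      by (auto simp: is_peak_Cons_Suc)
    finally show ?thesis
      using Cons.IH[of x] Cons by (simp add: peak_count_inf_Cons is_peak_def)
  qed (simp add: peak_count_inf.simps)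
qed simp

lemma perm_at_eq_nth: "perm_at xs = (!) (0 # xs)"
  by (auto simp: fun_eq_iff perm_at_def nth_Cons')

lemma peakL_eq_peak_count_inf: "peakL xs = peak_count_inf 0 xs"
  by (simp add: peakL_def peak_count_inf_eq_card is_peak_def perm_at_eq_nth conj_commute)

lemma set_drop_eq_image_nth: "set (drop n w) = (!) w ` {n..<length w}"
proof -
  have "set (drop n w) = set (drop n (map ((!) w) [0..<length w]))" by (simp only: map_nth)
  then show ?thesis by (simp add: drop_map)
qed

lemma rlmin_count_eq_card:
  "rlmin_count xs = card {i \<in> {1..length xs}. \<forall>y\<in>set (drop (Suc i) (a # xs)). (a # xs) ! i < y}"
proof (induction xs arbitrary: a)
  case (Cons x xs)
  have "{1..length (x # xs)} = insert 1 (Suc ` {1..length xs})"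
    by (auto simp: image_iff)
  then show ?case
    using Cons.IH[of x] card_filter_insert_Suc_image[of "{1..length xs}"] by simp
qed simp

lemma RLmin_eq_rlmin_count: "RLmin xs = rlmin_count xs"
proof -
  have "set (drop (Suc i) (0 # xs)) = (!) (0 # xs) ` {i<..length xs}" for i
  proof -
    have "{Suc i..<length (0 # xs)} = {i<..length xs}" by auto
    then show ?thesis by (simp only: set_drop_eq_image_nth)
  qed
  then show ?thesis
    by (simp only: RLmin_def rlmin_count_eq_card[of _ 0] perm_at_eq_nth ball_simps)
qed

section \<open>Splitting a word at its minimum\<close>

lemma peak_count_append:
  "peak_count a (xs @ y # ys) b =
     peak_count a xs y + (if last (a # xs) < y \<and> hd (ys @ [b]) < y then 1 else 0) + peak_count y ys b"
proof (induction xs arbitrary: a)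
  case (Cons x xs)
  then show ?case by (cases xs) (simp_all add: peak_count_Cons)
qed (simp add: peak_count_Cons)

lemma peak_count_inf_append:
  "peak_count_inf a (xs @ y # ys) = peak_count a xs y + peak_count_inf (last (a # xs)) (y # ys)"
proof (induction xs arbitrary: a)
  case (Cons x xs)
  then show ?case by (cases xs) (simp_all add: peak_count_inf_Cons peak_count_Cons)
qed simp

lemma peak_count_left_cong:
  "(xs \<noteq> [] \<Longrightarrow> a < hd xs \<and> a' < hd xs) \<Longrightarrow> peak_count a xs b = peak_count a' xs b"
  by (cases xs) (auto simp: peak_count_Cons)

lemma peak_count_inf_left_cong:
  "(xs \<noteq> [] \<Longrightarrow> a < hd xs \<and> a' < hd xs) \<Longrightarrow> peak_count_inf a xs = peak_count_inf a' xs"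
  by (cases xs) (auto simp: peak_count_inf_Cons)

lemma peak_count_right_cong:
  "\<forall>z\<in>set xs. b < z \<and> b' < z \<Longrightarrow> peak_count a xs b = peak_count a xs b'"
proof (induction xs arbitrary: a)
  case (Cons x xs)
  then show ?case by (cases xs) (auto simp: peak_count_Cons)
qed simp

lemma peak_count_le: "2 * peak_count a xs b \<le> Suc (length xs)"
proof -
  have "2 * peak_count a xs b \<le> length xs + (if xs \<noteq> [] \<and> a < hd xs then 1 else 0)"
  proof (induction xs arbitrary: a)
    case (Cons x xs)
    show ?case using Cons.IH[of x] by (cases xs) (auto simp: peak_count_Cons split: if_splits)
  qed simp
  then show ?thesis by (auto split: if_splits)
qed

lemma peak_count_inf_le: "2 * peak_count_inf a xs \<le> length xs"
proof -
  have "2 * peak_count_inf a xs + (if xs \<noteq> [] \<and> \<not> a < hd xs then 1 else 0) \<le> length xs"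
  proof (induction xs arbitrary: a)
    case (Cons x xs)
    show ?case using Cons.IH[of x] by (cases xs) (auto simp: peak_count_inf_Cons split: if_splits)
  qed simp
  then show ?thesis by (auto split: if_splits)
qed

lemma peak_count_inf_split_min:
  assumes "\<forall>z\<in>set xs. m < z" and "\<forall>z\<in>set ys. m < z" and "a \<le> m"
  shows "peak_count_inf a (xs @ m # ys) = peak_count a xs a + peak_count_inf a ys"
proof -
  have "peak_count_inf a (xs @ m # ys) = peak_count a xs m + peak_count_inf (last (a # xs)) (m # ys)"
    by (rule peak_count_inf_append)
  also have "peak_count_inf (last (a # xs)) (m # ys) = peak_count_inf m ys"
    using assms(2) by (cases ys) (auto simp: peak_count_inf_Cons)
  also have "\<dots> = peak_count_inf a ys"
    using assms(2,3) hd_in_set by (intro peak_count_inf_left_cong) fastforce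
  also have "peak_count a xs m = peak_count a xs a"
    using assms(1,3) by (intro peak_count_right_cong) auto
  finally show ?thesis .
qed

lemma peak_count_split_min:
  assumes "\<forall>z\<in>set xs. m < z" and "\<forall>z\<in>set ys. m < z" and "a \<le> m"
    and "xs \<noteq> [] \<or> ys \<noteq> []"
  shows "peak_count a (xs @ m # ys) a = peak_count a xs a + peak_count a ys a"
proof -
  have "\<not> (last (a # xs) < m \<and> hd (ys @ [a]) < m)"
    using assms by (cases xs rule: rev_cases; cases ys) auto
  then have "peak_count a (xs @ m # ys) a = peak_count a xs m + peak_count m ys a"
    by (simp add: peak_count_append)
  also have "peak_count m ys a = peak_count a ys a"
    using assms(2,3) hd_in_set by (intro peak_count_left_cong) fastforce
  also have "peak_count a xs m = peak_count a xs a"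
    using assms(1,3) by (intro peak_count_right_cong) auto
  finally show ?thesis .
qed

lemma rlmin_count_split_min:
  "\<forall>z\<in>set xs. m < z \<Longrightarrow> \<forall>z\<in>set ys. m < z \<Longrightarrow> rlmin_count (xs @ m # ys) = Suc (rlmin_count ys)"
  by (induction xs) auto

section \<open>Invariance under order-preserving relabelling\<close>

lemma peak_count_map_strict_mono:
  assumes "strict_mono_on A f" and "a \<in> A" and "b \<in> A" and "set xs \<subseteq> A"
  shows "peak_count (f a) (map f xs) (f b) = peak_count a xs b"
  using assms(2,4)
proof (induction xs arbitrary: a)
  case (Cons x xs)
  have "hd (map f xs @ [f b]) = f (hd (xs @ [b]))" by (cases xs) simp_all
  moreover have "hd (xs @ [b]) \<in> A" using Cons.prems assms(3) by (cases xs) simp_all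
  ultimately show ?case
    using Cons strict_mono_on_less[OF assms(1)] assms(3) by (simp add: peak_count_Cons)
qed simp

lemma peak_count_inf_map_strict_mono:
  assumes "strict_mono_on A f" and "a \<in> A" and "set xs \<subseteq> A"
  shows "peak_count_inf (f a) (map f xs) = peak_count_inf a xs"
  using assms(2,3)
proof (induction xs arbitrary: a)
  case (Cons x xs)
  then show ?case
    using strict_mono_on_less[OF assms(1)] by (cases xs) (simp_all add: peak_count_inf_Cons)
qed simp

lemma rlmin_count_map_strict_mono:
  "strict_mono_on A f \<Longrightarrow> set xs \<subseteq> A \<Longrightarrow> rlmin_count (map f xs) = rlmin_count xs"
  by (induction xs) (auto simp: strict_mono_on_less subset_iff)

text \<open>
  \<open>peak_weight\<close> weighs the factor to the left of the minimum, whose two borders are both smaller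
  than all of its letters.
\<close>

definition peak_weight :: "'a \<Rightarrow> 'a \<Rightarrow> nat list \<Rightarrow> 'a::comm_semiring_1" where
  "peak_weight u v xs = u ^ (2 * peak_count 0 xs 0) * v ^ (Suc (length xs) - 2 * peak_count 0 xs 0)"

definition peak_rlmin_weight :: "'a \<Rightarrow> 'a \<Rightarrow> 'a \<Rightarrow> nat list \<Rightarrow> 'a::comm_semiring_1" where
  "peak_rlmin_weight u v \<beta> xs =
     u ^ (2 * peak_count_inf 0 xs) * v ^ (length xs - 2 * peak_count_inf 0 xs) * \<beta> ^ rlmin_count xs"

definition peak_sum :: "'a \<Rightarrow> 'a \<Rightarrow> nat set \<Rightarrow> 'a::comm_semiring_1" where
  "peak_sum u v S = (\<Sum>\<sigma>\<in>permutations_of_set S. peak_weight u v \<sigma>)"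

definition peak_rlmin_sum :: "'a \<Rightarrow> 'a \<Rightarrow> 'a \<Rightarrow> nat set \<Rightarrow> 'a::comm_semiring_1" where
  "peak_rlmin_sum u v \<beta> S = (\<Sum>\<sigma>\<in>permutations_of_set S. peak_rlmin_weight u v \<beta> \<sigma>)"

lemma sum_permutations_of_set_image:
  assumes "inj_on f T"
  shows "(\<Sum>\<sigma>\<in>permutations_of_set (f ` T). g \<sigma>) = (\<Sum>\<sigma>\<in>permutations_of_set T. g (map f \<sigma>))"
proof -
  have "inj_on (map f) (permutations_of_set T)"
    using assms by (intro inj_on_mapI) (auto simp: permutations_of_set_def inj_on_subset)
  then show ?thesis by (simp add: permutations_of_set_image_inj[OF assms] sum.reindex)
qed

lemma peak_sum_image_strict_mono:
  assumes "strict_mono_on (insert 0 T) f" and "f 0 = 0"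
  shows "peak_sum u v (f ` T) = peak_sum u v T"
proof -
  have "inj_on f T" using strict_mono_on_imp_inj_on[OF assms(1)] by (rule inj_on_subset) auto
  moreover have "peak_weight u v (map f \<sigma>) = peak_weight u v \<sigma>" if "\<sigma> \<in> permutations_of_set T" for \<sigma>
  proof -
    have "set \<sigma> \<subseteq> insert 0 T" using that by (auto simp: permutations_of_set_def)
    then show ?thesis
      using peak_count_map_strict_mono[OF assms(1), of 0 0 \<sigma>] assms(2) by (simp add: peak_weight_def)
  qed
  ultimately show ?thesis by (simp add: peak_sum_def sum_permutations_of_set_image)
qed

lemma peak_rlmin_sum_image_strict_mono:
  assumes "strict_mono_on (insert 0 T) f" and "f 0 = 0"
  shows "peak_rlmin_sum u v \<beta> (f ` T) = peak_rlmin_sum u v \<beta> T"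
proof -
  have "inj_on f T" using strict_mono_on_imp_inj_on[OF assms(1)] by (rule inj_on_subset) auto
  moreover have "peak_rlmin_weight u v \<beta> (map f \<sigma>) = peak_rlmin_weight u v \<beta> \<sigma>"
    if "\<sigma> \<in> permutations_of_set T" for \<sigma>
  proof -
    have "set \<sigma> \<subseteq> insert 0 T" using that by (auto simp: permutations_of_set_def)
    then show ?thesis
      using peak_count_inf_map_strict_mono[OF assms(1), of 0 \<sigma>]
        rlmin_count_map_strict_mono[OF assms(1), of \<sigma>] assms(2)
      by (simp add: peak_rlmin_weight_def)
  qed
  ultimately show ?thesis by (simp add: peak_rlmin_sum_def sum_permutations_of_set_image)
qed

lemma obtain_strict_mono_enumeration:
  fixes S :: "nat set"
  assumes "finite S" and "0 \<notin> S"
  obtains f where "strict_mono_on (insert 0 {1..card S}) f" and "f 0 = 0" and "f ` {1..card S} = S"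
proof -
  obtain h where h: "bij_betw h {..<card S} S" "strict_mono_on {..<card S} h"
    using ex_bij_betw_strict_mono_card[OF assms(1)] by blast
  define f where "f i = (if i = 0 then 0 else h (i - 1))" for i
  have "f ` {1..card S} = f ` Suc ` {..<card S}" by (simp only: image_Suc_lessThan)
  also have "\<dots> = h ` {..<card S}" by (simp only: image_image) (simp add: f_def)
  also have "\<dots> = S" using h(1) by (simp add: bij_betw_def)
  finally have "f ` {1..card S} = S" .
  moreover have "strict_mono_on (insert 0 {1..card S}) f"
  proof (rule strict_mono_onI)
    fix i j assume "i \<in> insert 0 {1..card S}" "j \<in> insert 0 {1..card S}" "i < j"
    moreover have "0 < h k" if "k < card S" for k
      using that h(1) assms(2) by (metis bij_betwE gr0I lessThan_iff)
    ultimately show "f i < f j" using strict_mono_onD[OF h(2)] by (auto simp: f_def)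
  qed
  ultimately show ?thesis using that by (simp add: f_def)
qed

lemma peak_sum_eq_card:
  "finite S \<Longrightarrow> 0 \<notin> S \<Longrightarrow> peak_sum u v S = peak_sum u v {1..card S}"
  by (metis obtain_strict_mono_enumeration peak_sum_image_strict_mono)

lemma peak_rlmin_sum_eq_card:
  "finite S \<Longrightarrow> 0 \<notin> S \<Longrightarrow> peak_rlmin_sum u v \<beta> S = peak_rlmin_sum u v \<beta> {1..card S}"
  by (metis obtain_strict_mono_enumeration peak_rlmin_sum_image_strict_mono)

lemma takeWhile_neq_append_dropWhile:
  assumes "m \<in> set xs"
  shows "takeWhile (\<lambda>x. x \<noteq> m) xs @ m # tl (dropWhile (\<lambda>x. x \<noteq> m) xs) = xs"
proof -
  have "dropWhile (\<lambda>x. x \<noteq> m) xs \<noteq> []" using assms by (simp add: dropWhile_eq_Nil_conv)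
  moreover from this have "hd (dropWhile (\<lambda>x. x \<noteq> m) xs) = m" using hd_dropWhile by blast
  ultimately show ?thesis by (metis list.collapse takeWhile_dropWhile_id)
qed

lemma sum_permutations_of_set_split:
  fixes f :: "'a list \<Rightarrow> 'b::comm_monoid_add"
  assumes "finite S" and "m \<in> S"
  shows "(\<Sum>\<sigma>\<in>permutations_of_set S. f \<sigma>) =
    (\<Sum>T\<in>Pow (S - {m}). \<Sum>\<alpha>\<in>permutations_of_set T. \<Sum>\<gamma>\<in>permutations_of_set (S - {m} - T). f (\<alpha> @ m # \<gamma>))"
proof -
  define R where "R = S - {m}"
  define Sig where "Sig = (SIGMA T:Pow R. permutations_of_set T \<times> permutations_of_set (R - T))"
  define glue where "glue = (\<lambda>q :: 'a set \<times> 'a list \<times> 'a list. fst (snd q) @ m # snd (snd q))"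
  define cut where "cut = (\<lambda>\<sigma>. (set (takeWhile (\<lambda>x. x \<noteq> m) \<sigma>), takeWhile (\<lambda>x. x \<noteq> m) \<sigma>,
                                  tl (dropWhile (\<lambda>x. x \<noteq> m) \<sigma>)))"
  have "finite R" using assms(1) by (simp add: R_def)
  have "(\<Sum>T\<in>Pow R. \<Sum>\<alpha>\<in>permutations_of_set T. \<Sum>\<gamma>\<in>permutations_of_set (R - T). f (\<alpha> @ m # \<gamma>))
      = (\<Sum>T\<in>Pow R. \<Sum>p\<in>permutations_of_set T \<times> permutations_of_set (R - T). f (fst p @ m # snd p))"
    by (intro sum.cong refl) (simp add: sum.cartesian_product split_beta)
  also have "\<dots> = (\<Sum>q\<in>Sig. f (glue q))"
    unfolding Sig_def glue_def using \<open>finite R\<close>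
    by (subst sum.Sigma) (auto simp: finite_subset split_beta)
  also have "\<dots> = (\<Sum>\<sigma>\<in>permutations_of_set S. f \<sigma>)"
  proof (rule sum.reindex_bij_witness[where i = cut and j = glue])
    fix q assume "q \<in> Sig"
    then obtain T \<alpha> \<gamma> where q: "q = (T, \<alpha>, \<gamma>)" "T \<subseteq> R" "\<alpha> \<in> permutations_of_set T"
      "\<gamma> \<in> permutations_of_set (R - T)" unfolding Sig_def by auto
    then have "m \<notin> set \<alpha>" by (auto simp: permutations_of_set_def R_def)
    then have "takeWhile (\<lambda>x. x \<noteq> m) (\<alpha> @ m # \<gamma>) = \<alpha>" "dropWhile (\<lambda>x. x \<noteq> m) (\<alpha> @ m # \<gamma>) = m # \<gamma>"
      by (induction \<alpha>) auto
    then show "cut (glue q) = q" using q by (auto simp: cut_def glue_def permutations_of_set_def)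
    show "glue q \<in> permutations_of_set S"
      using q \<open>m \<notin> set \<alpha>\<close> assms by (auto simp: glue_def permutations_of_set_def R_def)
  next
    fix \<sigma> assume \<sigma>: "\<sigma> \<in> permutations_of_set S"
    define \<alpha> where "\<alpha> = takeWhile (\<lambda>x. x \<noteq> m) \<sigma>"
    define \<gamma> where "\<gamma> = tl (dropWhile (\<lambda>x. x \<noteq> m) \<sigma>)"
    have "m \<in> set \<sigma>" using \<sigma> assms(2) by (simp add: permutations_of_set_def)
    then have \<sigma>_eq: "\<sigma> = \<alpha> @ m # \<gamma>"
      unfolding \<alpha>_def \<gamma>_def by (rule takeWhile_neq_append_dropWhile[symmetric])
    then show "glue (cut \<sigma>) = \<sigma>" unfolding glue_def cut_def \<alpha>_def[symmetric] \<gamma>_def[symmetric] by simp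
    have "distinct (\<alpha> @ m # \<gamma>)" "set \<alpha> \<union> {m} \<union> set \<gamma> = S"
      using \<sigma> \<sigma>_eq by (auto simp: permutations_of_set_def)
    then show "cut \<sigma> \<in> Sig"
      unfolding cut_def Sig_def
      by (auto simp: permutations_of_set_def R_def \<alpha>_def[symmetric] \<gamma>_def[symmetric])
  qed simp
  finally show ?thesis by (simp add: R_def)
qed

lemma peak_weight_split_min:
  assumes "\<forall>z\<in>set \<alpha>. m < z" and "\<forall>z\<in>set \<gamma>. m < z" and "\<alpha> \<noteq> [] \<or> \<gamma> \<noteq> []"
  shows "peak_weight u v (\<alpha> @ m # \<gamma>) = peak_weight u v \<alpha> * peak_weight u v \<gamma>"
proof -
  define p q where p_q_def: "p = peak_count 0 \<alpha> 0" "q = peak_count 0 \<gamma> 0"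
  have "2 * p \<le> Suc (length \<alpha>)" "2 * q \<le> Suc (length \<gamma>)"
    unfolding p_q_def by (rule peak_count_le)+
  then have "Suc (length (\<alpha> @ m # \<gamma>)) - 2 * (p + q) = (Suc (length \<alpha>) - 2 * p) + (Suc (length \<gamma>) - 2 * q)"
    by simp
  moreover have "peak_count 0 (\<alpha> @ m # \<gamma>) 0 = p + q"
    unfolding p_q_def using assms by (intro peak_count_split_min) simp_all
  ultimately show ?thesis
    by (simp add: peak_weight_def flip: p_q_def) (simp add: power_add mult_ac)
qed

lemma peak_rlmin_weight_split_min:
  assumes "\<forall>z\<in>set \<alpha>. m < z" and "\<forall>z\<in>set \<gamma>. m < z"
  shows "peak_rlmin_weight u v \<beta> (\<alpha> @ m # \<gamma>) = \<beta> * peak_weight u v \<alpha> * peak_rlmin_weight u v \<beta> \<gamma>"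
proof -
  define p q where p_q_def: "p = peak_count 0 \<alpha> 0" "q = peak_count_inf 0 \<gamma>"
  have "2 * p \<le> Suc (length \<alpha>)" "2 * q \<le> length \<gamma>"
    unfolding p_q_def by (rule peak_count_le peak_count_inf_le)+
  then have "length (\<alpha> @ m # \<gamma>) - 2 * (p + q) = (Suc (length \<alpha>) - 2 * p) + (length \<gamma> - 2 * q)"
    by simp
  moreover have "peak_count_inf 0 (\<alpha> @ m # \<gamma>) = p + q"
    unfolding p_q_def using assms by (intro peak_count_inf_split_min) simp_all
  moreover have "rlmin_count (\<alpha> @ m # \<gamma>) = Suc (rlmin_count \<gamma>)"
    using assms by (rule rlmin_count_split_min)
  ultimately show ?thesis
    by (simp add: peak_weight_def peak_rlmin_weight_def flip: p_q_def) (simp add: power_add mult_ac)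
qed

lemma permutations_of_set_above_min:
  fixes m :: "'a::order"
  assumes "\<forall>z\<in>S. m \<le> z" and "T \<subseteq> S - {m}" and "\<sigma> \<in> permutations_of_set T"
  shows "\<forall>z\<in>set \<sigma>. m < z"
proof
  fix z assume "z \<in> set \<sigma>"
  then have "z \<in> S" and "z \<noteq> m" using assms(2,3) by (auto simp: permutations_of_set_def)
  with assms(1) show "m < z" by (simp add: order.strict_iff_order)
qed

lemma peak_sum_split_min:
  assumes "finite S" and "m \<in> S" and "\<forall>z\<in>S. m \<le> z" and "S - {m} \<noteq> {}"
  shows "peak_sum u v S = (\<Sum>T\<in>Pow (S - {m}). peak_sum u v T * peak_sum u v (S - {m} - T))"
proof -
  have "peak_weight u v (\<alpha> @ m # \<gamma>) = peak_weight u v \<alpha> * peak_weight u v \<gamma>"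
    if "T \<subseteq> S - {m}" "\<alpha> \<in> permutations_of_set T" "\<gamma> \<in> permutations_of_set (S - {m} - T)"
    for T \<alpha> \<gamma>
  proof (rule peak_weight_split_min)
    show "\<forall>z\<in>set \<alpha>. m < z" "\<forall>z\<in>set \<gamma>. m < z"
      using permutations_of_set_above_min[OF assms(3) that(1,2)]
        permutations_of_set_above_min[OF assms(3) Diff_subset that(3)] by blast+
    show "\<alpha> \<noteq> [] \<or> \<gamma> \<noteq> []"
      using that assms(4) by (auto simp: permutations_of_set_def)
  qed
  then show ?thesis
    by (simp add: peak_sum_def sum_permutations_of_set_split[OF assms(1,2)] sum_product)
qed

lemma peak_rlmin_sum_split_min:
  assumes "finite S" and "m \<in> S" and "\<forall>z\<in>S. m \<le> z"
  shows "peak_rlmin_sum u v \<beta> S = \<beta> * (\<Sum>T\<in>Pow (S - {m}). peak_sum u v T * peak_rlmin_sum u v \<beta> (S - {m} - T))"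
proof -
  have "peak_rlmin_weight u v \<beta> (\<alpha> @ m # \<gamma>) = \<beta> * (peak_weight u v \<alpha> * peak_rlmin_weight u v \<beta> \<gamma>)"
    if "T \<subseteq> S - {m}" "\<alpha> \<in> permutations_of_set T" "\<gamma> \<in> permutations_of_set (S - {m} - T)"
    for T \<alpha> \<gamma>
  proof -
    have "\<forall>z\<in>set \<alpha>. m < z" "\<forall>z\<in>set \<gamma>. m < z"
      using permutations_of_set_above_min[OF assms(3) that(1,2)]
        permutations_of_set_above_min[OF assms(3) Diff_subset that(3)] by blast+
    then show ?thesis by (simp add: peak_rlmin_weight_split_min mult.assoc)
  qed
  then have "peak_rlmin_sum u v \<beta> S = (\<Sum>T\<in>Pow (S - {m}). \<Sum>\<alpha>\<in>permutations_of_set T.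
      \<Sum>\<gamma>\<in>permutations_of_set (S - {m} - T). \<beta> * (peak_weight u v \<alpha> * peak_rlmin_weight u v \<beta> \<gamma>))"
    by (simp add: peak_rlmin_sum_def sum_permutations_of_set_split[OF assms(1,2)])
  then show ?thesis
    by (simp add: peak_sum_def peak_rlmin_sum_def sum_product) (simp add: sum_distrib_left)
qed

lemma sum_Pow_card_choose:
  fixes g :: "nat \<Rightarrow> nat \<Rightarrow> 'a::comm_semiring_1"
  assumes "finite R"
  shows "(\<Sum>T\<in>Pow R. g (card T) (card (R - T))) = (\<Sum>j\<le>card R. of_nat (card R choose j) * g j (card R - j))"
proof -
  have "(\<Sum>T\<in>Pow R. g (card T) (card (R - T))) = (\<Sum>T\<in>Pow R. g (card T) (card R - card T))"
    using assms by (intro sum.cong refl) (auto simp: card_Diff_subset finite_subset)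
  also have "\<dots> = (\<Sum>j\<le>card R. \<Sum>T\<in>{T \<in> Pow R. card T = j}. g (card T) (card R - card T))"
    using assms by (intro sum.group[symmetric]) (auto intro: card_mono)
  also have "\<dots> = (\<Sum>j\<le>card R. of_nat (card R choose j) * g j (card R - j))"
    using n_subsets[OF assms] by (intro sum.cong refl) simp
  finally show ?thesis .
qed

lemma peak_sum_empty [simp]: "peak_sum u v {} = v"
  by (simp add: peak_sum_def peak_weight_def)

lemma peak_sum_singleton: "a > 0 \<Longrightarrow> peak_sum u v {a} = u\<^sup>2"
  by (simp add: peak_sum_def peak_weight_def peak_count.simps)

lemma peak_rlmin_sum_empty [simp]: "peak_rlmin_sum u v \<beta> {} = 1"
  by (simp add: peak_rlmin_sum_def peak_rlmin_weight_def)

lemma peak_sum_Suc: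
  assumes "n \<ge> 1"
  shows "peak_sum u v {1..Suc n} = (\<Sum>j\<le>n. of_nat (n choose j) * (peak_sum u v {1..j} * peak_sum u v {1..n - j}))"
proof -
  have R: "{1..Suc n} - {1} = {2..Suc n}" by auto
  have "peak_sum u v {1..Suc n} = (\<Sum>T\<in>Pow {2..Suc n}. peak_sum u v T * peak_sum u v ({2..Suc n} - T))"
    using peak_sum_split_min[of "{1..Suc n}" 1 u v, unfolded R] assms by simp
  also have "\<dots> = (\<Sum>T\<in>Pow {2..Suc n}. peak_sum u v {1..card T} * peak_sum u v {1..card ({2..Suc n} - T)})"
  proof (rule sum.cong[OF refl])
    fix T assume "T \<in> Pow {2..Suc n}"
    then have "finite T" "0 \<notin> T" "finite ({2..Suc n} - T)" "0 \<notin> {2..Suc n} - T"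
      by (auto intro: finite_subset)
    then show "peak_sum u v T * peak_sum u v ({2..Suc n} - T) =
        peak_sum u v {1..card T} * peak_sum u v {1..card ({2..Suc n} - T)}"
      by (metis peak_sum_eq_card)
  qed
  also have "\<dots> = (\<Sum>j\<le>n. of_nat (n choose j) * (peak_sum u v {1..j} * peak_sum u v {1..n - j}))"
    by (subst sum_Pow_card_choose) simp_all
  finally show ?thesis .
qed

lemma peak_rlmin_sum_Suc:
  "peak_rlmin_sum u v \<beta> {1..Suc n} =
     \<beta> * (\<Sum>j\<le>n. of_nat (n choose j) * (peak_sum u v {1..j} * peak_rlmin_sum u v \<beta> {1..n - j}))"
proof -
  have R: "{1..Suc n} - {1} = {2..Suc n}" by auto
  have "peak_rlmin_sum u v \<beta> {1..Suc n} =
      \<beta> * (\<Sum>T\<in>Pow {2..Suc n}. peak_sum u v T * peak_rlmin_sum u v \<beta> ({2..Suc n} - T))"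
    using peak_rlmin_sum_split_min[of "{1..Suc n}" 1 u v \<beta>, unfolded R] by simp
  also have "(\<Sum>T\<in>Pow {2..Suc n}. peak_sum u v T * peak_rlmin_sum u v \<beta> ({2..Suc n} - T)) =
      (\<Sum>T\<in>Pow {2..Suc n}. peak_sum u v {1..card T} * peak_rlmin_sum u v \<beta> {1..card ({2..Suc n} - T)})"
  proof (rule sum.cong[OF refl])
    fix T assume "T \<in> Pow {2..Suc n}"
    then have "finite T" "0 \<notin> T" "finite ({2..Suc n} - T)" "0 \<notin> {2..Suc n} - T"
      by (auto intro: finite_subset)
    then show "peak_sum u v T * peak_rlmin_sum u v \<beta> ({2..Suc n} - T) =
        peak_sum u v {1..card T} * peak_rlmin_sum u v \<beta> {1..card ({2..Suc n} - T)}"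
      by (metis peak_sum_eq_card peak_rlmin_sum_eq_card)
  qed
  also have "\<dots> = (\<Sum>j\<le>n. of_nat (n choose j) * (peak_sum u v {1..j} * peak_rlmin_sum u v \<beta> {1..n - j}))"
    by (subst sum_Pow_card_choose) simp_all
  finally show ?thesis .
qed

section \<open>Exponential generating functions\<close>

lemma fps_deriv_egf:
  fixes a :: "nat \<Rightarrow> 'a::field_char_0"
  shows "fps_deriv (Abs_fps (\<lambda>n. a n / fact n)) = Abs_fps (\<lambda>n. a (Suc n) / fact n)"
  by (simp add: fps_eq_iff fact_Suc del: of_nat_Suc)

lemma egf_mult:
  fixes a b :: "nat \<Rightarrow> 'a::field_char_0"
  shows "Abs_fps (\<lambda>n. a n / fact n) * Abs_fps (\<lambda>n. b n / fact n) =
    Abs_fps (\<lambda>n. (\<Sum>j\<le>n. of_nat (n choose j) * (a j * b (n - j))) / fact n)"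
proof (rule fps_ext)
  fix n
  have "(\<Sum>j=0..n. a j / fact j * (b (n - j) / fact (n - j))) =
      (\<Sum>j\<le>n. of_nat (n choose j) * (a j * b (n - j)) / fact n)"
    by (intro sum.cong) (auto simp: binomial_fact atLeast0AtMost)
  then show "(Abs_fps (\<lambda>n. a n / fact n) * Abs_fps (\<lambda>n. b n / fact n)) $ n =
      Abs_fps (\<lambda>n. (\<Sum>j\<le>n. of_nat (n choose j) * (a j * b (n - j))) / fact n) $ n"
    by (simp add: fps_mult_nth sum_divide_distrib)
qed

definition peak_egf :: "'a \<Rightarrow> 'a \<Rightarrow> 'a::field_char_0 fps" where
  "peak_egf u v = Abs_fps (\<lambda>n. peak_sum u v {1..n} / fact n)"

definition peak_rlmin_egf :: "'a \<Rightarrow> 'a \<Rightarrow> 'a \<Rightarrow> 'a::field_char_0 fps" where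
  "peak_rlmin_egf u v \<beta> = Abs_fps (\<lambda>n. peak_rlmin_sum u v \<beta> {1..n} / fact n)"

lemma fps_deriv_peak_egf:
  "fps_deriv (peak_egf u v) = peak_egf u v * peak_egf u v - fps_const (v\<^sup>2 - u\<^sup>2)"
proof (rule fps_ext)
  fix n
  show "fps_deriv (peak_egf u v) $ n = (peak_egf u v * peak_egf u v - fps_const (v\<^sup>2 - u\<^sup>2)) $ n"
  proof (cases n)
    case 0
    then show ?thesis by (simp add: peak_egf_def fps_mult_nth peak_sum_singleton power2_eq_square)
  next
    case (Suc k)
    have "fps_deriv (peak_egf u v) $ n = peak_sum u v {1..Suc n} / fact n"
      by (simp add: peak_egf_def fps_deriv_egf)
    moreover have "(peak_egf u v * peak_egf u v) $ n =
        (\<Sum>j\<le>n. of_nat (n choose j) * (peak_sum u v {1..j} * peak_sum u v {1..n - j})) / fact n"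
      by (simp add: peak_egf_def egf_mult)
    ultimately show ?thesis using peak_sum_Suc[of n u v] Suc by simp
  qed
qed

lemma fps_deriv_peak_rlmin_egf:
  "fps_deriv (peak_rlmin_egf u v \<beta>) = fps_const \<beta> * peak_egf u v * peak_rlmin_egf u v \<beta>"
proof (rule fps_ext)
  fix n
  have "fps_deriv (peak_rlmin_egf u v \<beta>) $ n = peak_rlmin_sum u v \<beta> {1..Suc n} / fact n"
    by (simp add: peak_rlmin_egf_def fps_deriv_egf)
  moreover have "(peak_egf u v * peak_rlmin_egf u v \<beta>) $ n =
      (\<Sum>j\<le>n. of_nat (n choose j) * (peak_sum u v {1..j} * peak_rlmin_sum u v \<beta> {1..n - j})) / fact n"
    by (simp add: peak_egf_def peak_rlmin_egf_def egf_mult)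
  ultimately show "fps_deriv (peak_rlmin_egf u v \<beta>) $ n =
      (fps_const \<beta> * peak_egf u v * peak_rlmin_egf u v \<beta>) $ n"
    using peak_rlmin_sum_Suc[of u v \<beta> n] by (simp add: mult.assoc)
qed

section \<open>Solving the differential equations\<close>

lemma fps_linear_ode_zero:
  fixes Y H :: "'a::{idom,ring_char_0} fps"
  assumes "fps_deriv Y = H * Y" and "Y $ 0 = 0"
  shows "Y = 0"
proof -
  have "\<forall>m\<le>n. Y $ m = 0" for n
  proof (induction n)
    case 0
    then show ?case using assms(2) by simp
  next
    case (Suc n)
    have "fps_deriv Y $ n = 0" using Suc by (simp add: assms(1) fps_mult_nth)
    then have "of_nat (Suc n) * Y $ Suc n = 0" by (simp add: fps_deriv_nth del: of_nat_Suc)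
    then have "Y $ Suc n = 0" by (simp del: of_nat_Suc)
    then show ?case using Suc le_Suc_eq by auto
  qed
  then show ?thesis by (intro fps_ext) auto
qed

lemma fps_deriv_fps_exp_compose:
  fixes L :: "'a::field_char_0 fps"
  assumes "L $ 0 = 0"
  shows "fps_deriv (fps_exp c oo L) = fps_const c * fps_deriv L * (fps_exp c oo L)"
  by (simp add: fps_compose_deriv[OF assms] fps_compose_mult_distrib[OF assms] mult_ac)

lemma fps_deriv_fps_ln_compose:
  fixes G :: "'a::field_char_0 fps"
  assumes "G $ 0 = 1"
  shows "fps_deriv (fps_ln 1 oo (G - 1)) * G = fps_deriv G"
proof -
  have G1: "(G - 1) $ 0 = 0" using assms by simp
  have "(inverse (1 + fps_X) oo (G - 1)) * ((1 + fps_X) oo (G - 1)) = (1 :: 'a fps)"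
    by (simp add: inverse_mult_eq_1 flip: fps_compose_mult_distrib[OF G1])
  moreover have "(1 + fps_X) oo (G - 1) = G"
    by (simp add: fps_compose_add_distrib fps_X_fps_compose_startby0[OF G1])
  ultimately show ?thesis
    by (simp add: fps_compose_deriv[OF G1] fps_ln_deriv mult_ac)
qed

lemma fps_pow_real_eqI:
  fixes A G :: "real fps"
  assumes "G $ 0 = 1"
    and "fps_deriv A * G = fps_const \<beta> * fps_deriv G * A" and "A $ 0 = 1"
  shows "A = fps_pow_real G \<beta>"
proof -
  define L where "L = fps_ln 1 oo (G - 1)"
  define P where "P = fps_exp \<beta> oo L"
  have GG: "G * inverse G = 1" using assms(1) by (simp add: inverse_mult_eq_1')
  have "L $ 0 = 0" by (simp add: L_def)
  then have "fps_deriv P = fps_const \<beta> * fps_deriv L * P"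
    unfolding P_def by (rule fps_deriv_fps_exp_compose)
  moreover have "fps_deriv A = fps_const \<beta> * fps_deriv L * A"
  proof -
    have "fps_deriv A = fps_deriv A * G * inverse G" using GG by (simp add: mult.assoc)
    also have "\<dots> = fps_const \<beta> * (fps_deriv L * G) * inverse G * A"
      using assms(2) fps_deriv_fps_ln_compose[OF assms(1)] by (simp add: L_def mult_ac)
    also have "\<dots> = fps_const \<beta> * fps_deriv L * A"
      using GG by (simp add: mult_ac)
    finally show ?thesis .
  qed
  ultimately have "fps_deriv (A - P) = (fps_const \<beta> * fps_deriv L) * (A - P)"
    by (simp add: algebra_simps)
  moreover have "(A - P) $ 0 = 0" using assms(3) by (simp add: P_def \<open>L $ 0 = 0\<close>)
  ultimately have "A - P = 0" by (rule fps_linear_ode_zero)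
  then show ?thesis by (simp add: P_def L_def fps_pow_real_def)
qed

lemma fps_deriv_cosh_fps: "fps_deriv (cosh_fps d) = fps_const d * sinhw_fps d"
proof (rule fps_ext)
  fix n
  show "fps_deriv (cosh_fps d) $ n = (fps_const d * sinhw_fps d) $ n"
  proof (cases "even n")
    case False
    then have "Suc n div 2 = Suc (n div 2)" by presburger
    with False show ?thesis
      by (simp add: cosh_fps_def sinhw_fps_def fact_Suc field_simps del: of_nat_Suc)
  qed (simp add: cosh_fps_def sinhw_fps_def)
qed

lemma fps_deriv_sinhw_fps: "fps_deriv (sinhw_fps d) = cosh_fps d"
proof (rule fps_ext)
  fix n
  show "fps_deriv (sinhw_fps d) $ n = cosh_fps d $ n"
  proof (cases "even n")
    case True
    then have "Suc n div 2 = n div 2" by presburger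
    with True show ?thesis
      by (simp add: cosh_fps_def sinhw_fps_def fact_Suc field_simps del: of_nat_Suc)
  qed (simp add: cosh_fps_def sinhw_fps_def)
qed

lemma riccati_linearization:
  fixes X D :: "'a::{idom,ring_char_0} fps"
  assumes "fps_deriv X = X * X - fps_const d"
    and "fps_deriv (fps_deriv D) = fps_const d * D"
    and "X $ 0 * D $ 0 + fps_deriv D $ 0 = 0"
  shows "X * D = - fps_deriv D"
proof -
  define Y where "Y = X * D + fps_deriv D"
  have "fps_deriv Y = X * Y"
    by (simp add: Y_def assms(1,2) algebra_simps)
  moreover have "Y $ 0 = 0" using assms(3) by (simp add: Y_def)
  ultimately have "Y = 0" by (rule fps_linear_ode_zero)
  then show ?thesis by (simp add: Y_def eq_neg_iff_add_eq_0)
qed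

lemma riccati_pow_solution:
  fixes X A :: "real fps" and d v \<beta> :: real
  defines "D \<equiv> cosh_fps d - fps_const v * sinhw_fps d"
  assumes "fps_deriv X = X * X - fps_const d" and "X $ 0 = v"
    and "fps_deriv A = fps_const \<beta> * X * A" and "A $ 0 = 1"
  shows "A = fps_pow_real (inverse D) \<beta>"
proof (rule fps_pow_real_eqI)
  have D0: "D $ 0 = 1" by (simp add: D_def cosh_fps_def sinhw_fps_def)
  have "fps_deriv (fps_deriv D) = fps_const d * D"
    by (simp add: D_def fps_deriv_cosh_fps fps_deriv_sinhw_fps algebra_simps)
  moreover have "fps_deriv D $ 0 = - v"
    by (simp add: D_def fps_deriv_cosh_fps fps_deriv_sinhw_fps cosh_fps_def sinhw_fps_def)
  ultimately have XD: "X * D = - fps_deriv D"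
    using riccati_linearization[OF assms(2)] assms(3) D0 by simp
  have DG: "D * inverse D = 1" using D0 by (simp add: inverse_mult_eq_1')
  have "fps_deriv (inverse D) = X * D * (inverse D)\<^sup>2"
    using D0 XD by (simp add: fps_inverse_deriv)
  also have "\<dots> = X * inverse D"
    using DG by (simp add: power2_eq_square mult_ac)
  finally have "fps_deriv (inverse D) = X * inverse D" .
  then show "fps_deriv A * inverse D = fps_const \<beta> * fps_deriv (inverse D) * A"
    using assms(4) by (simp add: mult_ac)
  show "inverse D $ 0 = 1" using D0 by simp
qed (use assms(5) in simp)

lemma peak_rlmin_sum_eq:
  "peak_rlmin_sum u v \<beta> {1..n} =
     (\<Sum>\<sigma>\<in>permutations_of_set {1..n}. u ^ (2 * peakL \<sigma>) * v ^ (n - 2 * peakL \<sigma>) * \<beta> ^ RLmin \<sigma>)"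
  unfolding peak_rlmin_sum_def
proof (rule sum.cong[OF refl])
  fix \<sigma> assume "\<sigma> \<in> permutations_of_set {1..n}"
  then have "length \<sigma> = n" by (simp add: length_finite_permutations_of_set)
  then show "peak_rlmin_weight u v \<beta> \<sigma> = u ^ (2 * peakL \<sigma>) * v ^ (n - 2 * peakL \<sigma>) * \<beta> ^ RLmin \<sigma>"
    by (simp add: peak_rlmin_weight_def peakL_eq_peak_count_inf RLmin_eq_rlmin_count)
qed

theorem theorem4p2:
  fixes u v \<beta> :: real
  shows "Abs_fps (\<lambda>n. (\<Sum>\<sigma>\<in>permutations_of_set {1..n}.
             u ^ (2 * peakL \<sigma>) * v ^ (n - 2 * peakL \<sigma>) * \<beta> ^ RLmin \<sigma>) / fact n)
       = fps_pow_real
           (inverse (cosh_fps (v\<^sup>2 - u\<^sup>2) - fps_const v * sinhw_fps (v\<^sup>2 - u\<^sup>2)))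
           \<beta>"
proof -
  have "Abs_fps (\<lambda>n. (\<Sum>\<sigma>\<in>permutations_of_set {1..n}.
             u ^ (2 * peakL \<sigma>) * v ^ (n - 2 * peakL \<sigma>) * \<beta> ^ RLmin \<sigma>) / fact n)
      = peak_rlmin_egf u v \<beta>"
    unfolding peak_rlmin_egf_def peak_rlmin_sum_eq ..
  also have "\<dots> = fps_pow_real
           (inverse (cosh_fps (v\<^sup>2 - u\<^sup>2) - fps_const v * sinhw_fps (v\<^sup>2 - u\<^sup>2))) \<beta>"
    by (rule riccati_pow_solution[OF fps_deriv_peak_egf _ fps_deriv_peak_rlmin_egf])
      (simp_all add: peak_egf_def peak_rlmin_egf_def)
  finally show ?thesis .
qed

end
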